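(* Let $P:\mathbb{Z}\times[2]\to\mathbb{R}^2$ be a circular net such that for each $j\in[2]$ the points $\{P_{i,j}\}_{i\in\mathbb{Z}}$ lie on a line $\mathcal{H}_j$. For $i\in\mathbb{Z}$ let $\mathcal{V}_i$ be the line $P_{i,1}\vee P_{i,2}$. Then the lines $\{\mathcal{V}_{2i}\}_{i\in\mathbb{Z}}$ are parallel, and the lines $\{\mathcal{V}_{2i+1}\}_{i\in\mathbb{Z}}$ are parallel.
   Context: $[2]=\{1,2\}$. A circular net $P:\mathbb{Z}\times[2]\to\mathbb{R}^2$ is a map such that for all $i$ the four points $P_{i,1},P_{i+1,1},P_{i+1,2},P_{i,2}$ lie on a circle. $X\vee Y$ denotes the line through $X$ and $Y$. Standing assumption: all data are generic (in general position subject to the stated constraints). *)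

theory Defs
  imports "HOL-Analysis.Analysis"
begin

type_synonym point = "real ^ 2"

definition join :: "point \<Rightarrow> point \<Rightarrow> point set" where
  "join X Y = affine hull {X, Y}"

definition is_line :: "point set \<Rightarrow> bool" where
  "is_line L \<longleftrightarrow> (\<exists>X Y. X \<noteq> Y \<and> L = join X Y)"

text \<open>Parallel lines: one is a translate of the other (equal lines count as parallel).\<close>
definition parallel :: "point set \<Rightarrow> point set \<Rightarrow> bool" where
  "parallel L M \<longleftrightarrow> is_line L \<and> is_line M \<and> (\<exists>v. L = (\<lambda>x. v + x) ` M)"

definition concyclic :: "point \<Rightarrow> point \<Rightarrow> point \<Rightarrow> point \<Rightarrow> bool" where
  "concyclic A B C D \<longleftrightarrow> (\<exists>c r. r > 0 \<and> {A, B, C, D} \<subseteq> sphere c r)"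

text \<open>Circular net P : Z x [2] -> R^2, written curried; only j \<in> {1,2} is used.\<close>
definition circular_net :: "(int \<Rightarrow> nat \<Rightarrow> point) \<Rightarrow> bool" where
  "circular_net P \<longleftrightarrow> (\<forall>i. concyclic (P i 1) (P (i+1) 1) (P (i+1) 2) (P i 2))"

end

theory Submission
  imports Defs
begin

(* Parametrise the two lines as H_1 = {x + a u} and H_2 = {y + b w}, with P_{i,1}, P_{i,2} at
   parameters a_i, b_i.  If H_1 and H_2 meet, take x = y to be the intersection point: its power
   with respect to the i-th circle is a_i a_{i+1} |u|^2 = b_i b_{i+1} |w|^2 (intersecting chords),
   and comparing the circles i and i+1 gives a_{i+2} : b_{i+2} = a_i : b_i, so V_{i+2} is parallel
   to V_i by the intercept theorem.  If H_1 and H_2 are parallel, take w = u: the projection of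
   the centre onto the common direction bisects both chords, so b_i + b_{i+1} - a_i - a_{i+1}
   does not depend on i, b_i - a_i is 2-periodic and V_{i+2} is a translate of V_i. *)

lemma parallel_joinI:
  assumes "X \<noteq> Y" "Z \<noteq> W" "l \<noteq> 0" "W - Z = l *\<^sub>R (Y - X)"
  shows "parallel (join X Y) (join Z W)"
proof -
  have "(X - Z) + (Z + t *\<^sub>R (W - Z)) = X + (t * l) *\<^sub>R (Y - X)" for t
    using assms(4) by simp
  then have "(\<lambda>x. (X - Z) + x) ` join Z W = (\<lambda>t. X + t *\<^sub>R (Y - X)) ` range (\<lambda>t. t * l)"
    unfolding join_def affine_hull_2_alt image_image by presburger
  also have "range (\<lambda>t. t * l) = UNIV"
    using assms(3) by (intro surjI[of _ "\<lambda>t. t / l"]) simp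
  also have "(\<lambda>t. X + t *\<^sub>R (Y - X)) ` UNIV = join X Y"
    unfolding join_def affine_hull_2_alt ..
  finally show ?thesis
    using assms(1,2) unfolding parallel_def is_line_def by blast
qed

lemma points_on_line_param:
  assumes "is_line L" "\<And>i. P i \<in> L"
  obtains X u a where "u \<noteq> 0" "\<And>i. P i = X + a i *\<^sub>R u"
proof -
  obtain X Y where "X \<noteq> Y" "L = join X Y"
    using assms(1) unfolding is_line_def by blast
  then have "\<forall>i. \<exists>t. P i = X + t *\<^sub>R (Y - X)"
    using assms(2) unfolding join_def affine_hull_2_alt by blast
  then obtain a where "\<And>i. P i = X + a i *\<^sub>R (Y - X)"
    by metis
  with \<open>X \<noteq> Y\<close> show thesis
    using that[of "Y - X"] by simp
qed

lemma plane_lines_parallel_or_meet: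
  fixes X Y u w :: point
  assumes "u \<noteq> 0"
  obtains m where "w = m *\<^sub>R u"
  | t s where "X + t *\<^sub>R u = Y + s *\<^sub>R w"
proof (cases "w \<in> span {u}")
  case True
  then show ?thesis
    using that(1) by (auto simp: span_singleton)
next
  case False
  have "independent {w, u}"
    using False assms by (intro independent_insertI independent_empty) auto
  moreover have "card {w, u} = 2"
    using False span_base[of u "{u}"] by (cases "w = u") auto
  ultimately have "Y - X \<in> span {w, u}"
    using card_ge_dim_independent[of "{w, u}" UNIV] by auto
  then obtain k t where "Y - X - k *\<^sub>R w = t *\<^sub>R u"
    by (auto simp: span_breakdown_eq span_singleton)
  then have "X + t *\<^sub>R u = Y + (- k) *\<^sub>R w"
    by (simp add: algebra_simps)
  then show ?thesis
    using that(2) by blast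
qed

lemma dist_along_line_squared:
  fixes c p u :: "'a::real_inner"
  shows "(dist c (p + s *\<^sub>R u))\<^sup>2 = (dist c p)\<^sup>2 + 2 * s * ((p - c) \<bullet> u) + s\<^sup>2 * (u \<bullet> u)"
proof -
  have dist_eq: "dist c x = norm (x - c)" for x
    by (simp add: dist_norm norm_minus_commute)
  show ?thesis
    unfolding dist_eq power2_norm_eq_inner
    by (simp add: inner_diff_left inner_diff_right inner_add_left
        inner_add_right inner_commute power2_eq_square algebra_simps)
qed

lemma secant_midpoint:
  fixes c p u :: "'a::real_inner"
  assumes "dist c (p + s1 *\<^sub>R u) = r" "dist c (p + s2 *\<^sub>R u) = r" "s1 \<noteq> s2"
  shows "2 * ((p - c) \<bullet> u) + (s1 + s2) * (u \<bullet> u) = 0"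
proof -
  have "(dist c p)\<^sup>2 + 2 * s1 * ((p - c) \<bullet> u) + s1\<^sup>2 * (u \<bullet> u)
      = (dist c p)\<^sup>2 + 2 * s2 * ((p - c) \<bullet> u) + s2\<^sup>2 * (u \<bullet> u)"
    using assms(1,2) by (simp flip: dist_along_line_squared)
  then have "(s1 - s2) * (2 * ((p - c) \<bullet> u) + (s1 + s2) * (u \<bullet> u)) = 0"
    by (simp add: algebra_simps power2_eq_square)
  with assms(3) show ?thesis
    by simp
qed

lemma secant_power:
  fixes c p u :: "'a::real_inner"
  assumes "dist c (p + s1 *\<^sub>R u) = r" "dist c (p + s2 *\<^sub>R u) = r" "s1 \<noteq> s2"
  shows "(dist c p)\<^sup>2 - r\<^sup>2 = s1 * s2 * (u \<bullet> u)"
proof -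
  have "r\<^sup>2 = (dist c p)\<^sup>2 + 2 * s1 * ((p - c) \<bullet> u) + s1\<^sup>2 * (u \<bullet> u)"
    using assms(1) by (simp flip: dist_along_line_squared)
  moreover have "s1 * (2 * ((p - c) \<bullet> u) + (s1 + s2) * (u \<bullet> u)) = 0"
    using secant_midpoint[OF assms] by simp
  ultimately show ?thesis
    by (simp add: algebra_simps power2_eq_square)
qed

lemma parallel_chords:
  fixes c p q u :: "'a::real_inner"
  assumes "{p + a *\<^sub>R u, p + a' *\<^sub>R u, q + b *\<^sub>R u, q + b' *\<^sub>R u} \<subseteq> sphere c r"
    and "a \<noteq> a'" "b \<noteq> b'"
  shows "(b + b' - a - a') * (u \<bullet> u) = 2 * ((p - q) \<bullet> u)"
proof -
  from assms(1) have "dist c (p + a *\<^sub>R u) = r" "dist c (p + a' *\<^sub>R u) = r"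
    "dist c (q + b *\<^sub>R u) = r" "dist c (q + b' *\<^sub>R u) = r"
    by auto
  with assms(2,3) have "2 * ((p - c) \<bullet> u) + (a + a') * (u \<bullet> u) = 0"
    "2 * ((q - c) \<bullet> u) + (b + b') * (u \<bullet> u) = 0"
    by (auto intro: secant_midpoint)
  then show ?thesis
    by (simp add: inner_diff_left algebra_simps)
qed

lemma intersecting_chords:
  fixes c x u w :: "'a::real_inner"
  assumes "{x + a *\<^sub>R u, x + a' *\<^sub>R u, x + b *\<^sub>R w, x + b' *\<^sub>R w} \<subseteq> sphere c r"
    and "a \<noteq> a'" "b \<noteq> b'"
  shows "a * a' * (u \<bullet> u) = b * b' * (w \<bullet> w)"
proof -
  from assms(1) have "dist c (x + a *\<^sub>R u) = r" "dist c (x + a' *\<^sub>R u) = r"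
    "dist c (x + b *\<^sub>R w) = r" "dist c (x + b' *\<^sub>R w) = r"
    by auto
  with assms(2,3) show ?thesis
    using secant_power[of c x a u r a'] secant_power[of c x b w r b'] by simp
qed

lemma circle_chain_between_parallel_lines:
  fixes p q u :: "'a::real_inner" and a b :: "int \<Rightarrow> real"
  assumes circles: "\<And>i. \<exists>c r. {p + a i *\<^sub>R u, p + a (i+1) *\<^sub>R u, q + b i *\<^sub>R u, q + b (i+1) *\<^sub>R u} \<subseteq> sphere c r"
    and "u \<noteq> 0" and "\<And>i. a i \<noteq> a (i+1)" and "\<And>i. b i \<noteq> b (i+1)"
  shows "b (i+2) - a (i+2) = b i - a i"
proof -
  have chord: "(b j + b (j+1) - a j - a (j+1)) * (u \<bullet> u) = 2 * ((p - q) \<bullet> u)" for j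
    using circles[of j] parallel_chords assms(3,4) by metis
  have "(b (i+2) - a (i+2) - (b i - a i)) * (u \<bullet> u) = 0"
    using chord[of i] chord[of "i+1"] by (simp add: algebra_simps)
  with \<open>u \<noteq> 0\<close> show ?thesis
    by simp
qed

lemma proportional_pairs:
  fixes x y x' y' :: real
  assumes "x' * y = x * y'" "x \<noteq> 0 \<or> y \<noteq> 0" "x' \<noteq> 0 \<or> y' \<noteq> 0"
  obtains l where "l \<noteq> 0" "x' = l * x" "y' = l * y"
proof (cases "x = 0")
  case True
  with assms have "y \<noteq> 0" "x' = 0" "y' \<noteq> 0"
    by auto
  with True show ?thesis
    using that[of "y' / y"] by simp
next
  case False
  with assms have "x' \<noteq> 0" "y' = x' * y / x"
    by (auto simp: field_simps)
  with False show ?thesis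
    using that[of "x' / x"] by simp
qed

lemma ratio_preserved_two_apart:
  fixes a0 a1 a2 b0 b1 b2 U W :: real
  assumes "a0 * a1 * U = b0 * b1 * W" "a1 * a2 * U = b1 * b2 * W"
    and "U \<noteq> 0" "W \<noteq> 0" "a1 \<noteq> 0 \<or> b1 \<noteq> 0"
  shows "a2 * b0 = a0 * b2"
proof -
  have "a1 * U * (a0 * b2 - a2 * b0) = 0" "b1 * W * (a0 * b2 - a2 * b0) = 0"
    using assms(1,2) by algebra+
  with assms(3-5) show ?thesis
    by auto
qed

lemma circle_chain_between_intersecting_lines:
  fixes x u w :: "'a::real_inner" and a b :: "int \<Rightarrow> real"
  assumes circles: "\<And>i. \<exists>c r. {x + a i *\<^sub>R u, x + a (i+1) *\<^sub>R u, x + b i *\<^sub>R w, x + b (i+1) *\<^sub>R w} \<subseteq> sphere c r"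
    and "u \<noteq> 0" "w \<noteq> 0" and "\<And>i. a i \<noteq> a (i+1)" and "\<And>i. b i \<noteq> b (i+1)"
    and "\<And>i. a i \<noteq> 0 \<or> b i \<noteq> 0"
  shows "\<exists>l. l \<noteq> 0 \<and> a (i+2) = l * a i \<and> b (i+2) = l * b i"
proof -
  have chord: "a j * a (j+1) * (u \<bullet> u) = b j * b (j+1) * (w \<bullet> w)" for j
    using circles[of j] intersecting_chords assms(4,5) by metis
  have "a (i+2) * b i = a i * b (i+2)"
    using chord[of i] chord[of "i+1"] assms(2,3) assms(6)[of "i+1"]
    by (intro ratio_preserved_two_apart[of "a i" "a (i+1)" "u \<bullet> u" "b i" "b (i+1)" "w \<bullet> w"])
      (simp_all add: add.assoc)
  then obtain l where "l \<noteq> 0" "a (i+2) = l * a i" "b (i+2) = l * b i"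
    using proportional_pairs assms(6) by metis
  then show ?thesis
    by blast
qed

lemma nonzero_multiple_even_shift:
  fixes D :: "int \<Rightarrow> 'a::real_vector"
  assumes step: "\<And>j. \<exists>l. l \<noteq> 0 \<and> D (j+2) = l *\<^sub>R D j"
  shows "\<exists>l. l \<noteq> 0 \<and> D (m + 2*k) = l *\<^sub>R D m"
proof (induction k rule: int_induct[where k=0])
  case base
  show ?case
    by (intro exI[of _ 1]) simp
next
  case (step1 k)
  then obtain l l' where "l \<noteq> 0" "D (m + 2*k) = l *\<^sub>R D m"
    and "l' \<noteq> 0" "D (m + 2*k + 2) = l' *\<^sub>R D (m + 2*k)"
    using step by blast
  then show ?case
    by (intro exI[of _ "l' * l"]) (simp add: algebra_simps)
next
  case (step2 k)
  then obtain l l' where "l \<noteq> 0" "D (m + 2*k) = l *\<^sub>R D m"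
    and "l' \<noteq> 0" "D (m + 2*(k-1) + 2) = l' *\<^sub>R D (m + 2*(k-1))"
    using step by blast
  then have "D (m + 2*(k-1)) = (l / l') *\<^sub>R D m"
    by (simp add: eq_vector_fraction_iff)
  with \<open>l \<noteq> 0\<close> \<open>l' \<noteq> 0\<close> show ?case
    by (intro exI[of _ "l / l'"]) simp
qed

lemma circular_net_on_two_lines_rung_step:
  fixes P :: "int \<Rightarrow> nat \<Rightarrow> point"
  assumes net: "circular_net P"
    and generic: "\<And>i. distinct [P i 1, P (i+1) 1, P (i+1) 2, P i 2]"
    and "is_line L1" "\<And>i. P i 1 \<in> L1" and "is_line L2" "\<And>i. P i 2 \<in> L2"
  shows "\<exists>l. l \<noteq> 0 \<and> P (i+2) 2 - P (i+2) 1 = l *\<^sub>R (P i 2 - P i 1)"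
proof -
  obtain u X a where "u \<noteq> 0" and A: "\<And>j. P j 1 = X + a j *\<^sub>R u"
    using points_on_line_param[of L1 "\<lambda>j. P j 1", OF assms(3,4)] by metis
  obtain w Y b where "w \<noteq> 0" and B: "\<And>j. P j 2 = Y + b j *\<^sub>R w"
    using points_on_line_param[of L2 "\<lambda>j. P j 2", OF assms(5,6)] by metis
  have circles: "\<exists>c r. {P j 1, P (j+1) 1, P j 2, P (j+1) 2} \<subseteq> sphere c r" for j
  proof -
    have "{P j 1, P (j+1) 1, P j 2, P (j+1) 2} = {P j 1, P (j+1) 1, P (j+1) 2, P j 2}"
      by auto
    then show ?thesis
      using net unfolding circular_net_def concyclic_def by auto
  qed
  have "a j \<noteq> a (j+1)" "b j \<noteq> b (j+1)" "P j 1 \<noteq> P j 2" for j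
    using generic[of j] A[of j] A[of "j+1"] B[of j] B[of "j+1"] by auto
  from \<open>u \<noteq> 0\<close> show ?thesis
  proof (cases rule: plane_lines_parallel_or_meet[where X = X and Y = Y and u = u and w = w])
    case (1 m)
    then have B': "P j 2 = Y + (b j * m) *\<^sub>R u" for j
      using B by simp
    have "b (i+2) * m - a (i+2) = b i * m - a i"
      using circles \<open>u \<noteq> 0\<close> \<open>w \<noteq> 0\<close> \<open>\<And>j. a j \<noteq> a (j+1)\<close> \<open>\<And>j. b j \<noteq> b (j+1)\<close> 1 A B'
      by (intro circle_chain_between_parallel_lines[where p = X and q = Y and u = u]) simp_all
    moreover have "P j 2 - P j 1 = (Y - X) + (b j * m - a j) *\<^sub>R u" for j
      using A B' by (simp add: algebra_simps)
    ultimately show ?thesis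
      by (intro exI[of _ 1]) simp
  next
    case (2 t s)
    define x where "x = X + t *\<^sub>R u"
    have A': "P j 1 = x + (a j - t) *\<^sub>R u" and B': "P j 2 = x + (b j - s) *\<^sub>R w" for j
      using A B 2 by (simp_all add: x_def algebra_simps)
    have "a j - t \<noteq> 0 \<or> b j - s \<noteq> 0" for j
      using \<open>P j 1 \<noteq> P j 2\<close> A' B' by auto
    then have "\<exists>l. l \<noteq> 0 \<and> a (i+2) - t = l * (a i - t) \<and> b (i+2) - s = l * (b i - s)"
      using circles[unfolded A' B'] \<open>u \<noteq> 0\<close> \<open>w \<noteq> 0\<close> \<open>\<And>j. a j \<noteq> a (j+1)\<close>
        \<open>\<And>j. b j \<noteq> b (j+1)\<close>
      by (intro circle_chain_between_intersecting_lines[of x "\<lambda>j. a j - t" u "\<lambda>j. b j - s" w]) auto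
    then obtain l where "l \<noteq> 0" and la: "a (i+2) - t = l * (a i - t)"
      and lb: "b (i+2) - s = l * (b i - s)"
      by blast
    have "P j 2 - P j 1 = (b j - s) *\<^sub>R w - (a j - t) *\<^sub>R u" for j
      using A' B' by simp
    with \<open>l \<noteq> 0\<close> show ?thesis
      by (intro exI[of _ l]) (simp add: la lb scaleR_right_diff_distrib)
  qed
qed

theorem proposition4p12:
  fixes P :: "int \<Rightarrow> nat \<Rightarrow> point"
  assumes net: "circular_net P"
    and generic: "\<And>i. distinct [P i 1, P (i+1) 1, P (i+1) 2, P i 2]"
    and H: "\<And>j. j \<in> {1, 2} \<Longrightarrow> \<exists>L. is_line L \<and> (\<forall>i. P i j \<in> L)"
  shows "(\<forall>i k. parallel (join (P (2*i) 1) (P (2*i) 2)) (join (P (2*k) 1) (P (2*k) 2))) \<and>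
         (\<forall>i k. parallel (join (P (2*i+1) 1) (P (2*i+1) 2)) (join (P (2*k+1) 1) (P (2*k+1) 2)))"
proof -
  obtain L1 L2 where "is_line L1" "\<And>i. P i 1 \<in> L1" "is_line L2" "\<And>i. P i 2 \<in> L2"
    using H[of 1] H[of 2] by auto
  define D where "D i = P i 2 - P i 1" for i
  have "\<exists>l. l \<noteq> 0 \<and> D (j+2) = l *\<^sub>R D j" for j
    unfolding D_def by (rule circular_net_on_two_lines_rung_step) fact+
  then have rung_multiple: "\<exists>l. l \<noteq> 0 \<and> D (m + 2*k) = l *\<^sub>R D m" for m k
    by (rule nonzero_multiple_even_shift)
  have parallel_rungs: "parallel (join (P m 1) (P m 2)) (join (P (m + 2*k) 1) (P (m + 2*k) 2))" for m k
  proof -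
    obtain l where "l \<noteq> 0" "D (m + 2*k) = l *\<^sub>R D m"
      using rung_multiple by blast
    moreover have "P j 1 \<noteq> P j 2" for j
      using generic[of j] by auto
    ultimately show ?thesis
      by (intro parallel_joinI[where l = l]) (simp_all add: D_def)
  qed
  have "2*k = 2*i + 2*(k - i)" "2*k + 1 = (2*i + 1) + 2*(k - i)" for i k :: int
    by simp_all
  then show ?thesis
    using parallel_rungs by metis
qed

end
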